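(* Let $\nu$ be a finite measure on the Borel subsets of $(0,\infty)$. For $\Re(z)\ge0$ let $\Psi_\nu(z)=\int_0^\infty e^{-\lambda z}\,\mathrm{d}\nu(\lambda)$, and for $z\in\mathbb{C}$ let $K^\star_\nu(z)=\int_0^\infty K(\lambda,z)\,\mathrm{d}\nu(\lambda)$, where $K(\lambda, z) = \left(\frac{\cos \pi z}{\pi}\right)\sum_{n \in \mathbb{Z}} \frac{ (-1)^{n}\, e^{-\lambda|n- \frac{1}{2}|}}{z - n + \frac{1}{2}}$. If $0<\beta<\frac12$, then for every $z$ with $\Re(z)>\beta$, $$\Psi_\nu(z)-K^\star_\nu(z)=\frac{1}{2\pi i}\int_{\beta-i\infty}^{\beta+i\infty}\left(\frac{\cos\pi z}{\cos\pi w}\right)\left(\frac{2w}{z^2-w^2}\right)\Psi_\nu(w)\,\mathrm{d}w.$$ *)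

theory Defs
  imports "HOL-Analysis.Analysis"
begin

definition Psi_nu :: "real measure \<Rightarrow> complex \<Rightarrow> complex" where
  "Psi_nu \<nu> z = (LINT l|\<nu>. exp (- (complex_of_real l * z)))"

text \<open>The factor cos(pi z)/(z - n + 1/2) is given its continuous (removable-singularity)
  value -pi sin(pi (n - 1/2)) at z = n - 1/2, so that K(lambda, .) is entire.\<close>
definition K_term :: "real \<Rightarrow> complex \<Rightarrow> int \<Rightarrow> complex" where
  "K_term l z n =
     (let a = complex_of_int n - 1/2 in
       (if z = a then - complex_of_real pi * sin (complex_of_real pi * a)
        else cos (complex_of_real pi * z) / (z - a)) / complex_of_real pi
       * ((-1) powi n)
       * complex_of_real (exp (- l * \<bar>real_of_int n - 1/2\<bar>)))"

definition K_ker :: "real \<Rightarrow> complex \<Rightarrow> complex" where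
  "K_ker l z = (\<Sum>\<^sub>\<infinity>n::int. K_term l z n)"

definition K_star :: "real measure \<Rightarrow> complex \<Rightarrow> complex" where
  "K_star \<nu> z = (LINT l|\<nu>. K_ker l z)"

definition contour_integrand :: "real measure \<Rightarrow> complex \<Rightarrow> complex \<Rightarrow> complex" where
  "contour_integrand \<nu> z w =
     (cos (complex_of_real pi * z) / cos (complex_of_real pi * w))
     * (2 * w / (z\<^sup>2 - w\<^sup>2)) * Psi_nu \<nu> w"

end

theory Submission
  imports Defs "HOL-Complex_Analysis.Complex_Analysis" "HOL-Real_Asymp.Real_Asymp"
    "HOL-Probability.Sinc_Integral"
begin

text \<open>Fix \<open>\<lambda> > 0\<close> and put
  \<open>g(w) = (cos \<pi>z / cos \<pi>w) (2w / (z\<^sup>2 - w\<^sup>2)) exp(-\<lambda>w)\<close>.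
  In the half plane \<open>Re w > \<beta>\<close> its poles are \<open>w = z\<close>, with residue \<open>-exp(-\<lambda>z)\<close>,
  and \<open>w = m - 1/2\<close> (\<open>m \<ge> 1\<close>), whose residue is the sum of the terms \<open>n = m\<close> and
  \<open>n = 1 - m\<close> of the series \<open>K(\<lambda>, z)\<close>. The residue theorem on the rectangle
  \<open>[\<beta>, N] \<times> [-T, T]\<close> relates the integrals of \<open>g\<close> along the lines \<open>Re w = \<beta>\<close> and
  \<open>Re w = N\<close>. Since \<open>|cos \<pi>w|\<close> grows like \<open>exp(\<pi>|Im w|)\<close>, the horizontal sides vanish as
  \<open>T \<rightarrow> \<infinity>\<close>, and \<open>|cos \<pi>N| = 1\<close> makes the line \<open>Re w = N\<close> contribute \<open>O(1/N)\<close>.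
  Hence the integral of \<open>g\<close> along \<open>Re w = \<beta>\<close> is \<open>2\<pi> (exp(-\<lambda>z) - K(\<lambda>, z))\<close>, and
  integrating over \<open>\<nu>\<close> (Fubini, with the dominating function \<open>C exp(-\<pi>|t|)\<close>) gives the
  claim. If \<open>cos \<pi>z = 0\<close>, both sides vanish: the series \<open>K(\<lambda>, z)\<close> then reduces to the
  single term \<open>exp(-\<lambda>z)\<close>.\<close>

lemma integrable_exp_neg_abs:
  fixes a :: real assumes a: "0 < a"
  shows "integrable lborel (\<lambda>x::real. exp (- a * \<bar>x\<bar>))"
proof -
  define h where "h = (\<lambda>x::real. indicator {0<..} x *\<^sub>R exp (-(x*a)))"
  have h: "integrable lborel h"
    using integrable_I0i_exp_mscale[OF a] unfolding set_integrable_def h_def .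
  have "integrable lborel (\<lambda>x. h (0 + (-1) * x))"
    using lborel_integrable_real_affine_iff[of "-1" h 0] h by simp
  with h have i: "integrable lborel (\<lambda>x. h x + h (0 + (-1) * x))"
    by (rule Bochner_Integration.integrable_add)
  have ae: "AE x in lborel. h x + h (0 + (-1) * x) = exp (- a * \<bar>x\<bar>)"
    using AE_lborel_singleton[of 0]
    by eventually_elim (auto simp: h_def indicator_def abs_if mult.commute)
  show ?thesis
    by (rule integrable_cong_AE_imp[OF i _ ae]) measurable
qed

lemma norm_cos_squared_sinh: "norm (cos w) ^ 2 = cos (Re w) ^ 2 + sinh (Im w) ^ 2"
  using norm_cos_squared[of w] by (simp add: sinh_def exp_minus power_divide)

lemma norm_cos_ge_abs_cos_Re_mult_cosh: "\<bar>cos (Re w)\<bar> * cosh (Im w) \<le> norm (cos w)"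
proof (rule power2_le_imp_le)
  have "(\<bar>cos (Re w)\<bar> * cosh (Im w))\<^sup>2 = cos (Re w) ^ 2 * sinh (Im w) ^ 2 + cos (Re w) ^ 2"
    by (simp add: power_mult_distrib cosh_square_eq algebra_simps)
  also have "\<dots> \<le> sinh (Im w) ^ 2 + cos (Re w) ^ 2"
    by (intro add_right_mono mult_left_le_one_le) (auto simp: abs_square_le_1)
  finally show "(\<bar>cos (Re w)\<bar> * cosh (Im w))\<^sup>2 \<le> (norm (cos w))\<^sup>2"
    by (simp add: norm_cos_squared_sinh)
qed simp

lemma norm_cos_ge_abs_sinh_Im: "\<bar>sinh (Im w)\<bar> \<le> norm (cos w)"
  by (rule power2_le_imp_le) (simp_all add: norm_cos_squared_sinh)

lemma cosh_ge_exp_abs_half: "exp \<bar>y\<bar> / 2 \<le> cosh (y::real)"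
  by (cases "y \<ge> 0") (auto simp: cosh_def)

lemma norm_cos_pi_vertical_ge:
  "\<bar>cos (pi * c)\<bar> * (exp (pi * \<bar>t\<bar>) / 2) \<le> norm (cos (complex_of_real pi * Complex c t))"
proof -
  have "\<bar>cos (pi * c)\<bar> * (exp (pi * \<bar>t\<bar>) / 2) \<le> \<bar>cos (pi * c)\<bar> * cosh (pi * t)"
    using cosh_ge_exp_abs_half[of "pi * t"] by (intro mult_left_mono) (auto simp: abs_mult)
  also have "\<dots> \<le> norm (cos (complex_of_real pi * Complex c t))"
    using norm_cos_ge_abs_cos_Re_mult_cosh[of "complex_of_real pi * Complex c t"] by simp
  finally show ?thesis .
qed

lemma cos_pi_Complex_neq_0:
  assumes "cos (pi * c) \<noteq> 0" shows "cos (complex_of_real pi * Complex c t) \<noteq> 0"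
proof -
  have "0 < \<bar>cos (pi * c)\<bar> * (exp (pi * \<bar>t\<bar>) / 2)" using assms by simp
  with norm_cos_pi_vertical_ge[of c t] have "0 < norm (cos (complex_of_real pi * Complex c t))"
    by linarith
  then show ?thesis by simp
qed

lemma cos_pi_eq_0_iff: "cos (complex_of_real pi * w) = 0 \<longleftrightarrow> (\<exists>n::int. w = of_int n - 1/2)"
proof -
  have "complex_of_real pi * w = complex_of_real (real_of_int n * pi) + complex_of_real pi / 2
        \<longleftrightarrow> w = of_int (n + 1) - 1/2" for n :: int
  proof -
    have "complex_of_real (real_of_int n * pi) + complex_of_real pi / 2
          = complex_of_real pi * (of_int (n + 1) - 1/2)"
      by (simp add: algebra_simps)
    then show ?thesis by simp
  qed
  then have "cos (complex_of_real pi * w) = 0 \<longleftrightarrow> (\<exists>n::int. w = of_int (n + 1) - 1/2)"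
    by (simp add: cos_eq_0)
  also have "\<dots> \<longleftrightarrow> (\<exists>n::int. w = of_int n - 1/2)"
    by (metis add.commute diff_add_cancel)
  finally show ?thesis .
qed

lemma cos_pi_eq_0_right_half_plane:
  assumes "cos (complex_of_real pi * w) = 0" "0 < Re w"
  obtains m :: nat where "1 \<le> m" "w = of_nat m - 1/2"
proof -
  obtain n :: int where n: "w = of_int n - 1/2" using assms(1) cos_pi_eq_0_iff by blast
  with assms(2) have "1 \<le> n" by simp
  with n show ?thesis using that[of "nat n"] by simp
qed

lemma sin_pi_half_integer: "sin (complex_of_real pi * (of_nat m - 1/2)) = - ((-1) ^ m)"
proof -
  have "complex_of_real pi * (of_nat m - 1/2) = complex_of_real (real m * pi - pi/2)"
    by (simp add: algebra_simps)
  moreover have "sin (real m * pi - pi/2) = - ((-1) ^ m)"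
    by (simp add: sin_diff cos_npi)
  ultimately show ?thesis by (simp only: sin_of_real) simp
qed

lemma cos_pi_half_integer: "cos (complex_of_real pi * (of_nat m - 1/2)) = 0"
  using cos_pi_eq_0_iff[of "of_nat m - 1/2"] by (metis of_int_of_nat_eq)

lemma power2_diff_neq_0_right_half_plane:
  fixes z w :: complex
  assumes "0 < Re z" "0 < Re w" "w \<noteq> z"
  shows "z\<^sup>2 - w\<^sup>2 \<noteq> 0"
proof
  assume "z\<^sup>2 - w\<^sup>2 = 0"
  then have "(z - w) * (z + w) = 0" by (simp add: power2_eq_square algebra_simps)
  moreover have "z + w \<noteq> 0" using assms by (auto simp: add_eq_0_iff2)
  ultimately show False using assms(3) by simp
qed

lemma norm_two_mult_div_power2_diff_le:
  assumes "Re w = c" "0 < c" "0 < Re z" "Re z \<noteq> c"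
  shows "norm (2 * w / (z\<^sup>2 - w\<^sup>2)) \<le> 2 / \<bar>Re z - c\<bar> + 2 * norm z / (\<bar>Re z - c\<bar> * (Re z + c))"
proof -
  define d where "d = \<bar>Re z - c\<bar>"
  have d: "d > 0" using assms by (simp add: d_def)
  have n1: "norm (z - w) \<ge> d" unfolding d_def using abs_Re_le_cmod[of "z - w"] assms by simp
  have n2: "norm (z + w) \<ge> Re z + c" using complex_Re_le_cmod[of "z + w"] assms by simp
  have n2p: "Re z + c > 0" using assms by simp
  have nw: "norm (2 * w) \<le> 2 * (norm (z + w) + norm z)"
    using norm_triangle_ineq4[of "z + w" z] by simp
  have "z\<^sup>2 - w\<^sup>2 = (z - w) * (z + w)" by (simp add: power2_eq_square algebra_simps)
  then have "norm (2 * w / (z\<^sup>2 - w\<^sup>2)) = norm (2 * w) / (norm (z - w) * norm (z + w))"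
    by (simp add: norm_divide norm_mult)
  also have "\<dots> \<le> 2 * (norm (z + w) + norm z) / (norm (z - w) * norm (z + w))"
    using nw n1 n2 n2p d by (intro divide_right_mono) auto
  also have "\<dots> = 2 / norm (z - w) + 2 * norm z / (norm (z - w) * norm (z + w))"
  proof -
    have "norm (z - w) \<noteq> 0" "norm (z + w) \<noteq> 0" using n1 n2 n2p d by linarith+
    then show ?thesis by (simp add: field_simps)
  qed
  also have "\<dots> \<le> 2 / d + 2 * norm z / (d * (Re z + c))"
    using n1 n2 n2p d
    by (intro add_mono divide_left_mono mult_mono frac_le) (auto intro: mult_pos_pos)
  finally show ?thesis unfolding d_def .
qed

lemma integral_symmetric_interval_tendsto:
  fixes h :: "real \<Rightarrow> complex"
  assumes h: "integrable lborel h"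
  shows "((\<lambda>T. integral {-T..T} h) \<longlongrightarrow> (LINT t|lborel. h t)) at_top"
proof -
  have eq: "integral {-T..T} h = (LINT x|lborel. indicator {-T..T} x *\<^sub>R h x)" for T
  proof -
    have "set_integrable lborel {-T..T} h"
      unfolding set_integrable_def by (rule integrable_mult_indicator) (use h in auto)
    from set_borel_integral_eq_integral(2)[OF this] show ?thesis
      by (simp add: set_lebesgue_integral_def)
  qed
  have "((\<lambda>T. LINT x|lborel. indicator {-T..T} x *\<^sub>R h x) \<longlongrightarrow> (LINT t|lborel. h t)) at_top"
  proof (rule integral_dominated_convergence_at_top[where w="\<lambda>x. norm (h x)"])
    show "AE x in lborel. ((\<lambda>T. indicator {-T..T} x *\<^sub>R h x) \<longlongrightarrow> h x) at_top"
    proof (rule AE_I2)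
      fix x
      have "eventually (\<lambda>T. indicator {-T..T} x *\<^sub>R h x = h x) at_top"
        using eventually_ge_at_top[of "\<bar>x\<bar>"] by eventually_elim (auto simp: indicator_def)
      then show "((\<lambda>T. indicator {-T..T} x *\<^sub>R h x) \<longlongrightarrow> h x) at_top"
        by (rule tendsto_eventually)
    qed
    show "\<forall>\<^sub>F T in at_top. AE x in lborel. norm (indicator {-T..T} x *\<^sub>R h x) \<le> norm (h x)"
      by (intro always_eventually allI AE_I2) (auto simp: indicator_def)
  qed (use h in auto)
  then show ?thesis unfolding eq .
qed

lemma sum_int_symmetric_interval:
  fixes f :: "int \<Rightarrow> 'a::comm_monoid_add"
  shows "(\<Sum>n\<in>{1 - int N..int N}. f n) = (\<Sum>m\<in>{1..N}. f (int m) + f (1 - int m))"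
proof (induction N)
  case (Suc N)
  have "{1 - int (Suc N)..int (Suc N)} = insert (- int N) (insert (int N + 1) {1 - int N..int N})"
    by auto
  then have "(\<Sum>n\<in>{1 - int (Suc N)..int (Suc N)}. f n)
      = f (- int N) + (f (int N + 1) + (\<Sum>n\<in>{1 - int N..int N}. f n))"
    by simp
  with Suc show ?case by (simp add: add_ac)
qed simp

lemma infsum_symmetric_partial_sums_tendsto:
  fixes f :: "int \<Rightarrow> 'a::{comm_monoid_add, t2_space}"
  assumes "f summable_on UNIV"
  shows "(\<lambda>N::nat. \<Sum>n\<in>{1 - int N..int N}. f n) \<longlonglongrightarrow> infsum f UNIV"
proof -
  have "(sum f \<longlongrightarrow> infsum f UNIV) (finite_subsets_at_top UNIV)"
    using has_sum_infsum[OF assms] unfolding has_sum_def .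
  moreover have "filterlim (\<lambda>N::nat. {1 - int N..int N}) (finite_subsets_at_top UNIV) sequentially"
    unfolding filterlim_finite_subsets_at_top
  proof (intro allI impI)
    fix X :: "int set" assume X: "finite X \<and> X \<subseteq> UNIV"
    define M where "M = Max (insert 0 (abs ` X))"
    have M: "\<bar>x\<bar> \<le> M" if "x \<in> X" for x
      unfolding M_def using X that by (intro Max_ge) auto
    show "\<forall>\<^sub>F N in sequentially. finite {1 - int N..int N} \<and> X \<subseteq> {1 - int N..int N}
        \<and> {1 - int N..int N} \<subseteq> UNIV"
      using eventually_ge_at_top[of "nat M + 1"] by eventually_elim (force dest: M)
  qed
  ultimately show ?thesis by (rule filterlim_compose)
qed

lemma summable_on_int_from_nat:
  fixes f :: "int \<Rightarrow> 'a::{uniform_topological_group_add, topological_comm_monoid_add,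
    ab_group_add, complete_uniform_space}"
  assumes "(\<lambda>m::nat. f (int m)) summable_on UNIV" "(\<lambda>m::nat. f (- int m)) summable_on UNIV"
  shows "f summable_on UNIV"
proof -
  have "f summable_on int ` UNIV" "f summable_on (\<lambda>m::nat. - int m) ` UNIV"
    using assms by (subst summable_on_reindex; auto simp: inj_on_def o_def)+
  then have "f summable_on (int ` UNIV \<union> (\<lambda>m::nat. - int m) ` UNIV)"
    by (rule summable_on_union)
  moreover have "n \<in> int ` UNIV \<union> (\<lambda>m::nat. - int m) ` UNIV" for n :: int
  proof (cases "n \<ge> 0")
    case True
    then have "n = int (nat n)" by simp
    then show ?thesis by blast
  next
    case False
    then have "n = - int (nat (- n))" by simp
    then show ?thesis by blast
  qed
  ultimately show ?thesis by (metis UNIV_eq_I)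
qed

lemma exp_neg_abs_half_integer_summable:
  fixes l :: real assumes l: "0 < l"
  shows "(\<lambda>n::int. exp (- l * \<bar>real_of_int n - 1/2\<bar>)) summable_on UNIV"
proof (rule summable_on_int_from_nat)
  have q: "0 \<le> exp (-l)" "exp (-l) < 1" using l by auto
  have geometric: "(\<lambda>m::nat. C * exp (-l) ^ m) summable_on UNIV" for C
    using q by (intro norm_summable_imp_summable_on)
      (simp add: abs_mult power_abs summable_mult summable_geometric)
  have pw: "exp (-l) ^ m = exp (- l * real m)" for m
    by (simp add: exp_of_nat_mult[symmetric] algebra_simps)
  show "(\<lambda>m::nat. exp (- l * \<bar>real_of_int (int m) - 1/2\<bar>)) summable_on UNIV"
  proof (rule summable_on_comparison_test[OF geometric[of "exp (l/2)"]])
    fix m :: nat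
    have "exp (- l * \<bar>real m - 1/2\<bar>) \<le> exp (- l * (real m - 1/2))"
      using l by (intro exp_mono) (simp add: mult_le_cancel_left)
    also have "\<dots> = exp (l/2) * exp (-l) ^ m"
      by (simp add: pw flip: exp_add) (simp add: algebra_simps)
    finally show "exp (- l * \<bar>real_of_int (int m) - 1/2\<bar>) \<le> exp (l/2) * exp (-l) ^ m"
      by simp
  qed simp
  show "(\<lambda>m::nat. exp (- l * \<bar>real_of_int (- int m) - 1/2\<bar>)) summable_on UNIV"
  proof (rule summable_on_comparison_test[OF geometric[of 1]])
    fix m :: nat
    have "exp (- l * \<bar>- real m - 1/2\<bar>) \<le> exp (- l * real m)"
      using l by (intro exp_mono) (simp add: mult_le_cancel_left)
    then show "exp (- l * \<bar>real_of_int (- int m) - 1/2\<bar>) \<le> 1 * exp (-l) ^ m"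
      by (simp add: pw)
  qed simp
qed

lemma contour_integral_rectpath_sides:
  assumes x: "x1 < x2" and y: "y1 < y2"
    and cont: "continuous_on (path_image (rectpath (Complex x1 y1) (Complex x2 y2))) f"
  shows "f contour_integrable_on linepath (Complex x1 y1) (Complex x2 y1)"
    and "f contour_integrable_on linepath (Complex x2 y2) (Complex x1 y2)"
    and "contour_integral (rectpath (Complex x1 y1) (Complex x2 y2)) f =
     contour_integral (linepath (Complex x1 y1) (Complex x2 y1)) f
     + \<i> * integral {y1..y2} (\<lambda>t. f (Complex x2 t))
     + contour_integral (linepath (Complex x2 y2) (Complex x1 y2)) f
     - \<i> * integral {y1..y2} (\<lambda>t. f (Complex x1 t))"
proof -
  define a1 where "a1 = Complex x1 y1"
  define a2 where "a2 = Complex x2 y1"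
  define a3 where "a3 = Complex x2 y2"
  define a4 where "a4 = Complex x1 y2"
  have "path_image (rectpath a1 a3) = closed_segment a1 a2 \<union> closed_segment a2 a3
      \<union> closed_segment a3 a4 \<union> closed_segment a4 a1"
    by (simp add: rectpath_def Let_def path_image_join Un_assoc a1_def a2_def a3_def a4_def)
  then have c: "continuous_on (closed_segment a1 a2) f" "continuous_on (closed_segment a2 a3) f"
    "continuous_on (closed_segment a3 a4) f" "continuous_on (closed_segment a4 a1) f"
    using cont unfolding a1_def[symmetric] a3_def[symmetric]
    by (auto intro: continuous_on_subset)
  then have i: "f contour_integrable_on linepath a1 a2" "f contour_integrable_on linepath a2 a3"
    "f contour_integrable_on linepath a3 a4" "f contour_integrable_on linepath a4 a1"
    by (auto intro: contour_integrable_continuous_linepath)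
  then show "f contour_integrable_on linepath (Complex x1 y1) (Complex x2 y1)"
    and "f contour_integrable_on linepath (Complex x2 y2) (Complex x1 y2)"
    by (simp_all add: a1_def a2_def a3_def a4_def)
  have "contour_integral (rectpath a1 a3) f =
       contour_integral (linepath a1 a2) f + contour_integral (linepath a2 a3) f
       + contour_integral (linepath a3 a4) f + contour_integral (linepath a4 a1) f"
    unfolding rectpath_def Let_def using i
    by (simp add: a1_def a2_def a3_def a4_def add_ac)
  also have "contour_integral (linepath a2 a3) f = \<i> * integral {y1..y2} (\<lambda>t. f (Complex x2 t))"
    by (rule contour_integral_linepath_same_Re) (use y in \<open>auto simp: a2_def a3_def\<close>)
  also have "contour_integral (linepath a4 a1) f = - contour_integral (linepath a1 a4) f"
    by (rule contour_integral_reverse_linepath) (use c in \<open>simp add: closed_segment_commute\<close>)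
  also have "contour_integral (linepath a1 a4) f = \<i> * integral {y1..y2} (\<lambda>t. f (Complex x1 t))"
    by (rule contour_integral_linepath_same_Re) (use y in \<open>auto simp: a1_def a4_def\<close>)
  finally show "contour_integral (rectpath (Complex x1 y1) (Complex x2 y2)) f =
     contour_integral (linepath (Complex x1 y1) (Complex x2 y1)) f
     + \<i> * integral {y1..y2} (\<lambda>t. f (Complex x2 t))
     + contour_integral (linepath (Complex x2 y2) (Complex x1 y2)) f
     - \<i> * integral {y1..y2} (\<lambda>t. f (Complex x1 t))"
    by (simp add: a1_def a2_def a3_def a4_def)
qed

section \<open>The kernel for a single \<open>\<lambda>\<close>\<close>

definition contour_kernel :: "complex \<Rightarrow> real \<Rightarrow> complex \<Rightarrow> complex" where
  "contour_kernel z l w = (cos (complex_of_real pi * z) / cos (complex_of_real pi * w))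
     * (2 * w / (z\<^sup>2 - w\<^sup>2)) * exp (- (complex_of_real l * w))"

lemma contour_integrand_eq_integral_kernel:
  "contour_integrand \<nu> z w = (LINT l|\<nu>. contour_kernel z l w)"
  unfolding contour_integrand_def Psi_nu_def contour_kernel_def by simp

lemma contour_kernel_eq_quotient:
  "contour_kernel z l = (\<lambda>w. (cos (complex_of_real pi * z) * (2 * w) * exp (- (complex_of_real l * w)))
      / (cos (complex_of_real pi * w) * (z\<^sup>2 - w\<^sup>2)))"
  by (rule ext) (simp add: contour_kernel_def)

lemma contour_kernel_holomorphic:
  "contour_kernel z l holomorphic_on {w. cos (complex_of_real pi * w) \<noteq> 0 \<and> z\<^sup>2 - w\<^sup>2 \<noteq> 0}"
  unfolding contour_kernel_eq_quotient by (intro holomorphic_intros) auto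

lemma continuous_on_contour_kernel_vertical:
  assumes "0 < c" "cos (pi * c) \<noteq> 0" "0 < Re z" "Re z \<noteq> c"
  shows "continuous_on UNIV (\<lambda>p::real \<times> real. contour_kernel z (fst p) (Complex c (snd p)))"
proof -
  have "z\<^sup>2 - (Complex c t)\<^sup>2 \<noteq> 0" for t
    using assms by (intro power2_diff_neq_0_right_half_plane) auto
  then show ?thesis
    unfolding contour_kernel_def
    by (intro continuous_intros) (use cos_pi_Complex_neq_0[OF assms(2)] in auto)
qed

lemma norm_contour_kernel_vertical_le:
  assumes "0 < c" "cos (pi * c) \<noteq> 0" "0 < Re z" "Re z \<noteq> c"
  defines "M \<equiv> 2 / \<bar>Re z - c\<bar> + 2 * norm z / (\<bar>Re z - c\<bar> * (Re z + c))"
  shows "norm (contour_kernel z l (Complex c t)) \<le>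
     norm (cos (complex_of_real pi * z)) * (2 / \<bar>cos (pi * c)\<bar>) * M * exp (- l * c) * exp (- pi * \<bar>t\<bar>)"
proof -
  let ?w = "Complex c t"
  have pos: "0 < \<bar>cos (pi * c)\<bar> * (exp (pi * \<bar>t\<bar>) / 2)" using assms(2) by simp
  have "1 / norm (cos (complex_of_real pi * ?w)) \<le> 1 / (\<bar>cos (pi * c)\<bar> * (exp (pi * \<bar>t\<bar>) / 2))"
    by (rule frac_le; use norm_cos_pi_vertical_ge[of c t] pos in linarith)
  also have "\<dots> = (2 / \<bar>cos (pi * c)\<bar>) * exp (- pi * \<bar>t\<bar>)"
    by (simp add: exp_minus field_simps)
  finally have inv: "1 / norm (cos (complex_of_real pi * ?w)) \<le> (2 / \<bar>cos (pi * c)\<bar>) * exp (- pi * \<bar>t\<bar>)" .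
  have r: "norm (2 * ?w / (z\<^sup>2 - ?w\<^sup>2)) \<le> M"
    unfolding M_def by (rule norm_two_mult_div_power2_diff_le) (use assms in auto)
  have "norm (contour_kernel z l ?w) = norm (cos (complex_of_real pi * z))
      * (1 / norm (cos (complex_of_real pi * ?w))) * norm (2 * ?w / (z\<^sup>2 - ?w\<^sup>2)) * exp (- l * c)"
    unfolding contour_kernel_def by (simp add: norm_mult norm_divide)
  also have "\<dots> \<le> norm (cos (complex_of_real pi * z)) * ((2 / \<bar>cos (pi * c)\<bar>) * exp (- pi * \<bar>t\<bar>))
      * M * exp (- l * c)"
    by (intro mult_right_mono mult_mono mult_left_mono inv r) auto
  finally show ?thesis by (simp add: algebra_simps)
qed

lemma integrable_contour_kernel_vertical:
  assumes "0 < c" "cos (pi * c) \<noteq> 0" "0 < Re z" "Re z \<noteq> c"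
  shows "integrable lborel (\<lambda>t. contour_kernel z l (Complex c t))"
proof (rule Bochner_Integration.integrable_bound)
  let ?K = "norm (cos (complex_of_real pi * z)) * (2 / \<bar>cos (pi * c)\<bar>) *
      (2 / \<bar>Re z - c\<bar> + 2 * norm z / (\<bar>Re z - c\<bar> * (Re z + c))) * exp (- l * c)"
  show "integrable lborel (\<lambda>t. ?K * exp (- pi * \<bar>t\<bar>))"
    using integrable_exp_neg_abs[of pi] by simp
  have "continuous_on UNIV (\<lambda>t. contour_kernel z (fst (l, t)) (Complex c (snd (l, t))))"
    by (rule continuous_on_compose2[OF continuous_on_contour_kernel_vertical[OF assms]])
      (auto intro: continuous_intros)
  then show "(\<lambda>t. contour_kernel z l (Complex c t)) \<in> borel_measurable lborel"
    using borel_measurable_continuous_onI by simp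
  have "0 \<le> 2 / \<bar>Re z - c\<bar> + 2 * norm z / (\<bar>Re z - c\<bar> * (Re z + c))"
    using assms by (intro add_nonneg_nonneg divide_nonneg_nonneg mult_nonneg_nonneg) auto
  then have K0: "?K \<ge> 0" by (intro mult_nonneg_nonneg) auto
  have "norm (?K * exp (- pi * \<bar>t\<bar>)) = ?K * exp (- pi * \<bar>t\<bar>)" for t
    unfolding real_norm_def using mult_nonneg_nonneg[OF K0 exp_ge_zero] by (rule abs_of_nonneg)
  then show "AE t in lborel. norm (contour_kernel z l (Complex c t)) \<le> norm (?K * exp (- pi * \<bar>t\<bar>))"
    using norm_contour_kernel_vertical_le[OF assms] by (intro AE_I2) presburger
qed

lemma norm_contour_kernel_horizontal_le:
  assumes "\<bar>Im w\<bar> = T" "\<bar>Im z\<bar> < T" "0 \<le> Re w" "Re w \<le> R" "0 \<le> l"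
  shows "norm (contour_kernel z l w) \<le>
    norm (cos (complex_of_real pi * z)) / sinh (pi * T) * (2 * (R + T) / (T - \<bar>Im z\<bar>)\<^sup>2)"
proof -
  define d where "d = T - \<bar>Im z\<bar>"
  have d: "d > 0" and T: "T > 0" using assms(2) by (simp_all add: d_def)
  have "sinh (pi * T) = \<bar>sinh (Im (complex_of_real pi * w))\<bar>"
    using assms(1) by (simp add: abs_mult flip: sinh_real_abs)
  also have "\<dots> \<le> norm (cos (complex_of_real pi * w))" by (rule norm_cos_ge_abs_sinh_Im)
  finally have c: "sinh (pi * T) \<le> norm (cos (complex_of_real pi * w))" .
  have "d \<le> norm (z - w)" "d \<le> norm (z + w)"
    using abs_Im_le_cmod[of "z - w"] abs_Im_le_cmod[of "z + w"] assms(1) unfolding d_def by simp_all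
  moreover have "norm (2 * w) \<le> 2 * (R + T)"
    using cmod_le[of w] assms by simp
  moreover have "z\<^sup>2 - w\<^sup>2 = (z - w) * (z + w)" by (simp add: power2_eq_square algebra_simps)
  ultimately have r: "norm (2 * w / (z\<^sup>2 - w\<^sup>2)) \<le> 2 * (R + T) / (d * d)"
    using d T assms(3,4) by (simp only: norm_divide norm_mult) (intro frac_le mult_mono; simp)
  have "0 < sinh (pi * T)" using T by simp
  with c have i: "norm (cos (complex_of_real pi * z)) / norm (cos (complex_of_real pi * w))
      \<le> norm (cos (complex_of_real pi * z)) / sinh (pi * T)"
    by (intro divide_left_mono mult_pos_pos) auto
  have "norm (contour_kernel z l w) = norm (cos (complex_of_real pi * z)) / norm (cos (complex_of_real pi * w))
      * norm (2 * w / (z\<^sup>2 - w\<^sup>2)) * norm (exp (- (complex_of_real l * w)))"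
    unfolding contour_kernel_def by (simp add: norm_mult norm_divide)
  also have "\<dots> \<le> norm (cos (complex_of_real pi * z)) / sinh (pi * T) * (2 * (R + T) / (d * d)) * 1"
    using T d assms(3,4,5) \<open>0 < sinh (pi * T)\<close>
    by (intro mult_mono i r) (auto intro: divide_nonneg_pos)
  finally show ?thesis unfolding d_def by (simp add: power2_eq_square)
qed

lemma norm_contour_integral_horizontal_le:
  assumes "0 \<le> l" "0 \<le> xl" "\<bar>Im z\<bar> < T" "\<bar>y\<bar> = T"
    and "Im a = y" "Im b = y" "Re a \<in> {xl..xr}" "Re b \<in> {xl..xr}"
    and "contour_kernel z l contour_integrable_on linepath a b"
  shows "norm (contour_integral (linepath a b) (contour_kernel z l)) \<le>
     norm (cos (complex_of_real pi * z)) / sinh (pi * T) * (2 * (xr + T) / (T - \<bar>Im z\<bar>)\<^sup>2) * norm (b - a)"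
proof (rule contour_integral_bound_linepath[OF assms(9)])
  have "T > 0" using assms(3) by linarith
  then show "0 \<le> norm (cos (complex_of_real pi * z)) / sinh (pi * T) * (2 * (xr + T) / (T - \<bar>Im z\<bar>)\<^sup>2)"
    using assms by (intro mult_nonneg_nonneg divide_nonneg_nonneg) auto
  fix w assume "w \<in> closed_segment a b"
  then have "Im w = y" "Re w \<in> closed_segment (Re a) (Re b)"
    using assms by (auto simp: closed_segment_same_Im)
  then have "Im w = y" "xl \<le> Re w" "Re w \<le> xr"
    using assms by (auto simp: closed_segment_eq_real_ivl split: if_splits)
  then show "norm (contour_kernel z l w) \<le>
      norm (cos (complex_of_real pi * z)) / sinh (pi * T) * (2 * (xr + T) / (T - \<bar>Im z\<bar>)\<^sup>2)"
    using assms by (intro norm_contour_kernel_horizontal_le) auto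
qed

lemma residue_contour_kernel_simple_pole:
  assumes "cos (complex_of_real pi * z) * a * exp (- (complex_of_real l * a)) \<noteq> 0"
    and "cos (complex_of_real pi * a) * (z\<^sup>2 - a\<^sup>2) = 0"
    and "D = - (complex_of_real pi * sin (complex_of_real pi * a)) * (z\<^sup>2 - a\<^sup>2)
        - 2 * a * cos (complex_of_real pi * a)" "D \<noteq> 0"
  shows "residue (contour_kernel z l) a = cos (complex_of_real pi * z) * (2 * a) * exp (- (complex_of_real l * a)) / D"
  unfolding contour_kernel_eq_quotient
proof (rule residue_simple_pole_deriv[where s=UNIV])
  show "((\<lambda>w. cos (complex_of_real pi * w) * (z\<^sup>2 - w\<^sup>2)) has_field_derivative D) (at a)"
    unfolding assms(3) by (auto intro!: derivative_eq_intros simp: power2_eq_square algebra_simps)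
qed (use assms in \<open>auto intro!: holomorphic_intros\<close>)

lemma residue_contour_kernel_at_z:
  assumes "cos (complex_of_real pi * z) \<noteq> 0" "z \<noteq> 0"
  shows "residue (contour_kernel z l) z = - exp (- (complex_of_real l * z))"
proof -
  have "residue (contour_kernel z l) z = cos (complex_of_real pi * z) * (2 * z) * exp (- (complex_of_real l * z))
      / (- 2 * z * cos (complex_of_real pi * z))"
    by (rule residue_contour_kernel_simple_pole) (use assms in auto)
  then show ?thesis using assms by (simp add: field_simps)
qed

text \<open>The poles \<open>\<pm>(m - 1/2)\<close> of \<open>1/cos \<pi>w\<close> correspond to the terms \<open>n = m\<close> and
  \<open>n = 1 - m\<close> of \<open>K(\<lambda>, z)\<close>; only \<open>m - 1/2\<close> lies in the right half plane, and its residue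
  accounts for both.\<close>

lemma K_term_pair_half_integer:
  fixes l :: real and z :: complex and m :: nat
  assumes "1 \<le> m" "z \<noteq> of_nat m - 1/2" "z \<noteq> 1/2 - of_nat m"
  defines "E \<equiv> complex_of_real (exp (- l * (real m - 1/2)))"
  shows "K_term l z (int m) + K_term l z (1 - int m)
    = cos (complex_of_real pi * z) / (z - (of_nat m - 1/2)) / complex_of_real pi * (-1) ^ m * E
      + cos (complex_of_real pi * z) / (z + (of_nat m - 1/2)) / complex_of_real pi * (- ((-1) ^ m)) * E"
proof -
  have "\<bar>real_of_int (int m) - 1/2\<bar> = real m - 1/2" "\<bar>real_of_int (1 - int m) - 1/2\<bar> = real m - 1/2"
    using assms(1) by simp_all
  moreover have "(-1::complex) powi (1 - int m) = - ((-1) ^ m)"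
    by (cases "even m") (simp_all add: power_int_diff power_int_of_nat)
  ultimately show ?thesis using assms(2,3)
    unfolding K_term_def Let_def E_def by (simp add: power_int_of_nat diff_eq_eq)
qed

lemma residue_contour_kernel_at_half_integer:
  assumes "cos (complex_of_real pi * z) \<noteq> 0" "0 < Re z" "1 \<le> m"
  shows "residue (contour_kernel z l) (of_nat m - 1/2) = K_term l z (int m) + K_term l z (1 - int m)"
proof -
  define a :: complex where "a = of_nat m - 1/2"
  define E :: complex where "E = complex_of_real (exp (- l * (real m - 1/2)))"
  define s :: complex where "s = (-1) ^ m"
  have za: "z - a \<noteq> 0" using assms(1) cos_pi_half_integer[of m] by (auto simp: a_def)
  have za': "z + a \<noteq> 0" using assms(2,3) by (auto simp: a_def complex_eq_iff)
  have a0: "a \<noteq> 0" using assms(3) by (auto simp: a_def complex_eq_iff)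
  have eE: "exp (- (complex_of_real l * a)) = E"
    unfolding E_def exp_of_real[symmetric] by (simp add: a_def algebra_simps)
  have fac: "z\<^sup>2 - a\<^sup>2 = (z - a) * (z + a)" by (simp add: power2_eq_square algebra_simps)
  have za2: "z\<^sup>2 - a\<^sup>2 \<noteq> 0" using za za' by (simp add: fac)
  have "residue (contour_kernel z l) a
      = cos (complex_of_real pi * z) * (2 * a) * E / (complex_of_real pi * s * (z\<^sup>2 - a\<^sup>2))"
    by (subst residue_contour_kernel_simple_pole[where D = "complex_of_real pi * s * (z\<^sup>2 - a\<^sup>2)"])
      (use assms a0 za2 in \<open>simp_all add: a_def s_def eE[unfolded a_def] E_def
        sin_pi_half_integer cos_pi_half_integer\<close>)
  also have "\<dots> = cos (complex_of_real pi * z) * E * (1 / s) / complex_of_real pi * (2 * a / ((z - a) * (z + a)))"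
    by (simp add: fac ac_simps)
  also have "\<dots> = cos (complex_of_real pi * z) / (z - a) / complex_of_real pi * s * E
      + cos (complex_of_real pi * z) / (z + a) / complex_of_real pi * (- s) * E"
  proof -
    have "2 * a / ((z - a) * (z + a)) = 1 / (z - a) - 1 / (z + a)"
      using za za' by (simp add: field_simps)
    moreover have "1 / s = s" by (simp add: s_def divide_eq_eq flip: power_add)
    ultimately show ?thesis by (simp only:) (simp add: divide_inverse algebra_simps)
  qed
  also have "\<dots> = K_term l z (int m) + K_term l z (1 - int m)"
    using za za' assms(3) unfolding E_def s_def a_def
    by (intro K_term_pair_half_integer[symmetric]) (auto simp: algebra_simps)
  finally show ?thesis unfolding a_def .
qed

lemma contour_kernel_pole_in_strip:
  assumes "cos (complex_of_real pi * w) = 0 \<or> z\<^sup>2 - w\<^sup>2 = 0" "0 < Re z" "0 < Re w" "Re w < real N + 1/2"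
  shows "w \<in> insert z ((\<lambda>m. of_nat m - 1/2) ` {1..N})"
  using assms(1)
proof
  assume "cos (complex_of_real pi * w) = 0"
  then obtain m where "1 \<le> m" "w = of_nat m - 1/2"
    using cos_pi_eq_0_right_half_plane assms(3) by blast
  moreover from this assms(4) have "m \<le> N" by simp
  ultimately show ?thesis by auto
next
  assume "z\<^sup>2 - w\<^sup>2 = 0"
  then show ?thesis using power2_diff_neq_0_right_half_plane[of z w] assms(2,3) by auto
qed

lemma sum_residues_contour_kernel:
  assumes "cos (complex_of_real pi * z) \<noteq> 0" "0 < Re z"
  shows "(\<Sum>p\<in>insert z ((\<lambda>m. of_nat m - 1/2) ` {1..N}). residue (contour_kernel z l) p)
    = (\<Sum>n\<in>{1 - int N..int N}. K_term l z n) - exp (- (complex_of_real l * z))"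
proof -
  have "z \<notin> (\<lambda>m. of_nat m - 1/2) ` {1..N}" using assms(1) cos_pi_half_integer by auto
  moreover have "inj_on (\<lambda>m. of_nat m - 1/2 :: complex) {1..N}" by (auto simp: inj_on_def)
  moreover have "(\<Sum>m\<in>{1..N}. residue (contour_kernel z l) (of_nat m - 1/2))
      = (\<Sum>n\<in>{1 - int N..int N}. K_term l z n)"
    unfolding sum_int_symmetric_interval using assms
    by (intro sum.cong refl residue_contour_kernel_at_half_integer) auto
  moreover have "residue (contour_kernel z l) z = - exp (- (complex_of_real l * z))"
    using assms by (intro residue_contour_kernel_at_z) auto
  ultimately show ?thesis by (simp add: sum.reindex)
qed

lemma contour_integral_rectpath_contour_kernel:
  fixes N :: nat
  assumes \<beta>: "0 < \<beta>" "\<beta> < 1/2" "\<beta> < Re z" and cz: "cos (complex_of_real pi * z) \<noteq> 0"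
    and zN: "Re z < real N" and zT: "\<bar>Im z\<bar> < T"
  shows "continuous_on (path_image (rectpath (Complex \<beta> (-T)) (Complex (real N) T))) (contour_kernel z l)"
    and "contour_integral (rectpath (Complex \<beta> (-T)) (Complex (real N) T)) (contour_kernel z l) =
      2 * pi * \<i> * ((\<Sum>n\<in>{1 - int N..int N}. K_term l z n) - exp (- (complex_of_real l * z)))"
proof -
  define a1 where "a1 = Complex \<beta> (-T)"
  define a3 where "a3 = Complex (real N) T"
  define S where "S = box (Complex (\<beta>/2) (-T-1)) (Complex (real N + 1/4) (T+1))"
  define H where "H = (\<lambda>m::nat. (of_nat m - 1/2 :: complex))"
  define pts where "pts = insert z (H ` {1..N})"
  have T0: "T > 0" using zT by linarith
  have le: "Re a1 \<le> Re a3" "Im a1 \<le> Im a3" using \<beta> zN T0 by (auto simp: a1_def a3_def)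
  have pts_box: "pts \<subseteq> box a1 a3"
    using \<beta> zN zT T0 by (force simp: pts_def H_def in_box_complex_iff a1_def a3_def)
  have cbox_S: "cbox a1 a3 \<subseteq> S"
    using \<beta> T0 by (auto simp: in_box_complex_iff in_cbox_complex_iff a1_def a3_def S_def)
  have "S - pts \<subseteq> {w. cos (complex_of_real pi * w) \<noteq> 0 \<and> z\<^sup>2 - w\<^sup>2 \<noteq> 0}"
  proof
    fix w assume "w \<in> S - pts"
    then have "0 < Re w" "Re w < real N + 1/2" "w \<notin> insert z (H ` {1..N})"
      using \<beta> by (auto simp: S_def pts_def in_box_complex_iff)
    then show "w \<in> {w. cos (complex_of_real pi * w) \<noteq> 0 \<and> z\<^sup>2 - w\<^sup>2 \<noteq> 0}"
      using contour_kernel_pole_in_strip[of w z N] \<beta> unfolding H_def by auto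
  qed
  then have holo: "contour_kernel z l holomorphic_on S - pts"
    by (rule holomorphic_on_subset[OF contour_kernel_holomorphic])
  have pimg: "path_image (rectpath a1 a3) \<subseteq> S - pts"
    using path_image_rectpath_subset_cbox[OF le] path_image_rectpath_inter_box[OF le] pts_box cbox_S
    by blast
  have "contour_integral (rectpath a1 a3) (contour_kernel z l) =
        2 * pi * \<i> * (\<Sum>p\<in>pts. winding_number (rectpath a1 a3) p * residue (contour_kernel z l) p)"
  proof (rule Residue_theorem[OF _ _ _ holo valid_path_rectpath _ pimg])
    show "open S" "connected S" unfolding S_def by (simp_all add: open_box convex_connected)
    show "\<forall>w. w \<notin> S \<longrightarrow> winding_number (rectpath a1 a3) w = 0"
      using cbox_S le by (auto intro!: winding_number_rectpath_outside)
  qed (simp_all add: pts_def)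
  also have "\<dots> = 2 * pi * \<i> * (\<Sum>p\<in>pts. residue (contour_kernel z l) p)"
    using pts_box by (simp add: winding_number_rectpath subset_iff)
  also have "(\<Sum>p\<in>pts. residue (contour_kernel z l) p)
      = (\<Sum>n\<in>{1 - int N..int N}. K_term l z n) - exp (- (complex_of_real l * z))"
    unfolding pts_def H_def using cz \<beta> by (intro sum_residues_contour_kernel) auto
  finally show "contour_integral (rectpath (Complex \<beta> (-T)) (Complex (real N) T)) (contour_kernel z l) =
      2 * pi * \<i> * ((\<Sum>n\<in>{1 - int N..int N}. K_term l z n) - exp (- (complex_of_real l * z)))"
    by (simp add: a1_def a3_def)
  show "continuous_on (path_image (rectpath (Complex \<beta> (-T)) (Complex (real N) T))) (contour_kernel z l)"
    using holomorphic_on_imp_continuous_on[OF holo] pimg unfolding a1_def a3_def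
    by (rule continuous_on_subset)
qed

lemma norm_vertical_integrals_diff_le:
  fixes N :: nat
  assumes l: "0 \<le> l" and \<beta>: "0 < \<beta>" "\<beta> < 1/2" "\<beta> < Re z" and cz: "cos (complex_of_real pi * z) \<noteq> 0"
    and zN: "Re z < real N" and zT: "\<bar>Im z\<bar> < T"
  shows "norm (integral {-T..T} (\<lambda>t. contour_kernel z l (Complex \<beta> t))
      - integral {-T..T} (\<lambda>t. contour_kernel z l (Complex (real N) t))
      - 2 * pi * (exp (- (complex_of_real l * z)) - (\<Sum>n\<in>{1 - int N..int N}. K_term l z n)))
    \<le> 2 * (norm (cos (complex_of_real pi * z)) / sinh (pi * T)
      * (2 * (real N + T) / (T - \<bar>Im z\<bar>)\<^sup>2) * (real N - \<beta>))"
proof -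
  define I\<^sub>\<beta> where "I\<^sub>\<beta> = integral {-T..T} (\<lambda>t. contour_kernel z l (Complex \<beta> t))"
  define I\<^sub>N where "I\<^sub>N = integral {-T..T} (\<lambda>t. contour_kernel z l (Complex (real N) t))"
  define R where "R = exp (- (complex_of_real l * z)) - (\<Sum>n\<in>{1 - int N..int N}. K_term l z n)"
  define H1 where "H1 = contour_integral (linepath (Complex \<beta> (-T)) (Complex (real N) (-T))) (contour_kernel z l)"
  define H3 where "H3 = contour_integral (linepath (Complex (real N) T) (Complex \<beta> T)) (contour_kernel z l)"
  define B where "B = norm (cos (complex_of_real pi * z)) / sinh (pi * T)
      * (2 * (real N + T) / (T - \<bar>Im z\<bar>)\<^sup>2) * (real N - \<beta>)"
  have bN: "\<beta> < real N" and T: "-T < T" using \<beta> zN zT by linarith+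
  note sides = contour_integral_rectpath_sides[OF bN T
      contour_integral_rectpath_contour_kernel(1)[OF \<beta> cz zN zT]]
  have "H1 + \<i> * I\<^sub>N + H3 - \<i> * I\<^sub>\<beta> + 2 * pi * \<i> * R = 0"
    using sides(3) contour_integral_rectpath_contour_kernel(2)[OF \<beta> cz zN zT]
    by (simp add: H1_def H3_def I\<^sub>\<beta>_def I\<^sub>N_def R_def algebra_simps)
  moreover have "\<i> * (I\<^sub>\<beta> - I\<^sub>N - 2 * pi * R) - (H1 + H3) = - (H1 + \<i> * I\<^sub>N + H3 - \<i> * I\<^sub>\<beta> + 2 * pi * \<i> * R)"
    by (simp add: algebra_simps)
  ultimately have X: "norm (I\<^sub>\<beta> - I\<^sub>N - 2 * pi * R) = norm (H1 + H3)"
    by (metis diff_eq_diff_eq diff_self minus_zero norm_ii norm_mult mult_1)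
  have "norm H1 \<le> norm (cos (complex_of_real pi * z)) / sinh (pi * T) * (2 * (real N + T) / (T - \<bar>Im z\<bar>)\<^sup>2)
      * norm (Complex (real N) (-T) - Complex \<beta> (-T))"
    unfolding H1_def using l \<beta> bN zT sides(1)
    by (intro norm_contour_integral_horizontal_le[where y = "-T" and xl = \<beta>]) auto
  also have "norm (Complex (real N) (-T) - Complex \<beta> (-T)) = real N - \<beta>"
    using bN by (simp add: cmod_def)
  finally have h1: "norm H1 \<le> B" unfolding B_def .
  have "norm H3 \<le> norm (cos (complex_of_real pi * z)) / sinh (pi * T) * (2 * (real N + T) / (T - \<bar>Im z\<bar>)\<^sup>2)
      * norm (Complex \<beta> T - Complex (real N) T)"
    unfolding H3_def using l \<beta> bN zT sides(2)
    by (intro norm_contour_integral_horizontal_le[where y = T and xl = \<beta>]) auto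
  also have "norm (Complex \<beta> T - Complex (real N) T) = real N - \<beta>"
    using bN by (simp add: cmod_def)
  finally have h3: "norm H3 \<le> B" unfolding B_def .
  have "norm (I\<^sub>\<beta> - I\<^sub>N - 2 * pi * R) \<le> 2 * B"
    using norm_triangle_ineq[of H1 H3] h1 h3 X by linarith
  then show ?thesis unfolding I\<^sub>\<beta>_def I\<^sub>N_def R_def B_def .
qed

lemma line_integral_contour_kernel_shift:
  fixes N :: nat
  assumes l: "0 \<le> l" and \<beta>: "0 < \<beta>" "\<beta> < 1/2" "\<beta> < Re z" and cz: "cos (complex_of_real pi * z) \<noteq> 0"
    and zN: "Re z < real N"
  shows "(LINT t|lborel. contour_kernel z l (Complex \<beta> t)) = (LINT t|lborel. contour_kernel z l (Complex (real N) t))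
     + 2 * pi * (exp (- (complex_of_real l * z)) - (\<Sum>n\<in>{1 - int N..int N}. K_term l z n))"
proof -
  define E where "E = 2 * pi * (exp (- (complex_of_real l * z)) - (\<Sum>n\<in>{1 - int N..int N}. K_term l z n))"
  define D where "D T = integral {-T..T} (\<lambda>t. contour_kernel z l (Complex \<beta> t))
      - integral {-T..T} (\<lambda>t. contour_kernel z l (Complex (real N) t)) - E" for T
  have "cos (pi * \<beta>) > 0" using \<beta> by (intro cos_gt_zero) (auto simp: field_simps)
  then have "integrable lborel (\<lambda>t. contour_kernel z l (Complex \<beta> t))"
    using \<beta> by (intro integrable_contour_kernel_vertical) auto
  moreover have "integrable lborel (\<lambda>t. contour_kernel z l (Complex (real N) t))"
    using \<beta> zN by (intro integrable_contour_kernel_vertical) (auto simp: mult.commute[of pi] cos_npi)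
  ultimately have lim: "(D \<longlongrightarrow> (LINT t|lborel. contour_kernel z l (Complex \<beta> t))
      - (LINT t|lborel. contour_kernel z l (Complex (real N) t)) - E) at_top"
    unfolding D_def by (intro tendsto_diff integral_symmetric_interval_tendsto tendsto_const)
  have lim0: "(D \<longlongrightarrow> 0) at_top"
  proof (rule Lim_null_comparison)
    show "\<forall>\<^sub>F T in at_top. norm (D T) \<le> 2 * (norm (cos (complex_of_real pi * z)) / sinh (pi * T)
        * (2 * (real N + T) / (T - \<bar>Im z\<bar>)\<^sup>2) * (real N - \<beta>))"
      using eventually_gt_at_top[of "\<bar>Im z\<bar>"]
      by eventually_elim (unfold D_def E_def, rule norm_vertical_integrals_diff_le[OF l \<beta> cz zN])
    show "((\<lambda>T. 2 * (norm (cos (complex_of_real pi * z)) / sinh (pi * T)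
        * (2 * (real N + T) / (T - \<bar>Im z\<bar>)\<^sup>2) * (real N - \<beta>))) \<longlongrightarrow> 0) at_top"
      by real_asymp
  qed
  from tendsto_unique[OF _ lim lim0] show ?thesis by (simp add: E_def diff_eq_eq)
qed

lemma norm_integral_contour_kernel_vertical_le:
  assumes "0 < c" "cos (pi * c) \<noteq> 0" "0 < Re z" "Re z \<noteq> c"
  shows "norm (LINT t|lborel. contour_kernel z l (Complex c t))
    \<le> norm (cos (complex_of_real pi * z)) * (2 / \<bar>cos (pi * c)\<bar>)
      * (2 / \<bar>Re z - c\<bar> + 2 * norm z / (\<bar>Re z - c\<bar> * (Re z + c))) * exp (- l * c)
      * (LINT t|lborel. exp (- pi * \<bar>t\<bar>))"
proof -
  have "norm (LINT t|lborel. contour_kernel z l (Complex c t))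
      \<le> (LINT t|lborel. norm (cos (complex_of_real pi * z)) * (2 / \<bar>cos (pi * c)\<bar>)
          * (2 / \<bar>Re z - c\<bar> + 2 * norm z / (\<bar>Re z - c\<bar> * (Re z + c))) * exp (- l * c)
          * exp (- pi * \<bar>t\<bar>))"
    using integrable_contour_kernel_vertical[OF assms] integrable_exp_neg_abs[of pi]
      norm_contour_kernel_vertical_le[OF assms]
    by (intro Bochner_Integration.integral_norm_bound_integral) simp_all
  then show ?thesis by simp
qed

lemma vertical_line_integral_contour_kernel_tendsto_0:
  assumes l: "0 \<le> l" and z: "0 < Re z"
  shows "(\<lambda>N::nat. LINT t|lborel. contour_kernel z l (Complex (real N) t)) \<longlonglongrightarrow> 0"
proof (rule Lim_null_comparison)
  define I where "I = (LINT t|lborel. exp (- pi * \<bar>t\<bar>))"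
  define M where "M N = 2 / (real N - Re z) + 2 * norm z / ((real N - Re z) * (Re z + real N))" for N :: nat
  have "I \<ge> 0" unfolding I_def by simp
  have bound: "norm (LINT t|lborel. contour_kernel z l (Complex (real N) t))
      \<le> norm (cos (complex_of_real pi * z)) * 2 * M N * I" if N: "Re z < real N" for N
  proof -
    have N0: "0 < real N" and zN: "Re z \<noteq> real N" using N z by linarith+
    have cN: "\<bar>cos (pi * real N)\<bar> = 1" by (simp add: mult.commute[of pi] cos_npi)
    then have "cos (pi * real N) \<noteq> 0" by auto
    note norm_integral_contour_kernel_vertical_le[OF N0 this z zN, of l]
    also have "2 / \<bar>Re z - real N\<bar> + 2 * norm z / (\<bar>Re z - real N\<bar> * (Re z + real N)) = M N"
      using N by (simp add: M_def abs_if)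
    also have "norm (cos (complex_of_real pi * z)) * (2 / \<bar>cos (pi * real N)\<bar>) * M N * exp (- l * real N)
        * (LINT t|lborel. exp (- pi * \<bar>t\<bar>)) = norm (cos (complex_of_real pi * z)) * 2 * (M N * exp (- l * real N)) * I"
      by (simp add: cN I_def)
    also have "\<dots> \<le> norm (cos (complex_of_real pi * z)) * 2 * (M N * 1) * I"
    proof -
      have "0 \<le> M N" unfolding M_def using N z
        by (intro add_nonneg_nonneg divide_nonneg_nonneg mult_nonneg_nonneg) auto
      then show ?thesis using l N0 \<open>I \<ge> 0\<close> by (intro mult_right_mono mult_left_mono) auto
    qed
    finally show ?thesis by simp
  qed
  have "\<forall>\<^sub>F N in sequentially. Re z < real N"
    using filterlim_real_sequentially unfolding filterlim_at_top_dense by blast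
  then show "\<forall>\<^sub>F N in sequentially. norm (LINT t|lborel. contour_kernel z l (Complex (real N) t))
      \<le> norm (cos (complex_of_real pi * z)) * 2 * M N * I"
    by eventually_elim (rule bound)
  show "(\<lambda>N. norm (cos (complex_of_real pi * z)) * 2 * M N * I) \<longlonglongrightarrow> 0"
    unfolding M_def by real_asymp
qed

lemma K_term_summable:
  assumes l: "0 < l" and cz: "cos (complex_of_real pi * z) \<noteq> 0"
  shows "K_term l z summable_on UNIV"
proof -
  define k :: int where "k = \<lceil>norm z\<rceil> + 2"
  define C where "C = norm (cos (complex_of_real pi * z)) / pi"
  have bound: "norm (K_term l z n) \<le> C * exp (- l * \<bar>real_of_int n - 1/2\<bar>)" if n: "n \<notin> {-k..k}" for n
  proof -
    define a :: complex where "a = of_int n - 1/2"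
    have za: "z \<noteq> a" using cz cos_pi_eq_0_iff unfolding a_def by blast
    have "real_of_int \<bar>n\<bar> \<ge> real_of_int (k + 1)" using n by auto
    then have "norm z + 3 \<le> real_of_int \<bar>n\<bar>" unfolding k_def by linarith
    moreover have "\<bar>Re a\<bar> = \<bar>real_of_int n - 1/2\<bar>" by (simp add: a_def)
    ultimately have "norm z + 2 \<le> norm a" using abs_Re_le_cmod[of a] by linarith
    then have d: "1 \<le> norm (z - a)" using norm_triangle_ineq2[of a z] by (simp add: norm_minus_commute)
    have "norm (K_term l z n) = norm (cos (complex_of_real pi * z)) / norm (z - a) / pi
        * exp (- l * \<bar>real_of_int n - 1/2\<bar>)"
      using za unfolding K_term_def Let_def a_def[symmetric] by (simp add: norm_mult norm_divide norm_power_int)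
    also have "\<dots> \<le> norm (cos (complex_of_real pi * z)) / 1 / pi * exp (- l * \<bar>real_of_int n - 1/2\<bar>)"
      using d by (intro mult_right_mono divide_right_mono divide_left_mono) auto
    finally show ?thesis by (simp add: C_def)
  qed
  have "(\<lambda>n. norm (K_term l z n)) summable_on {-k..k} \<union> (UNIV - {-k..k})"
  proof (rule summable_on_union)
    show "(\<lambda>n. norm (K_term l z n)) summable_on (UNIV - {-k..k})"
    proof (rule summable_on_comparison_test)
      show "(\<lambda>n. C * exp (- l * \<bar>real_of_int n - 1/2\<bar>)) summable_on (UNIV - {-k..k})"
        by (rule summable_on_subset[OF summable_on_cmult_right[OF exp_neg_abs_half_integer_summable[OF l]]]) auto
    qed (use bound in auto)
  qed simp
  then show ?thesis by (simp add: summable_on_iff_abs_summable_on_complex)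
qed

lemma line_integral_contour_kernel:
  assumes l: "0 < l" and \<beta>: "0 < \<beta>" "\<beta> < 1/2" "\<beta> < Re z" and cz: "cos (complex_of_real pi * z) \<noteq> 0"
  shows "(LINT t|lborel. contour_kernel z l (Complex \<beta> t)) = 2 * pi * (exp (- (complex_of_real l * z)) - K_ker l z)"
proof -
  define F where "F N = (LINT t|lborel. contour_kernel z l (Complex (real N) t))
     + 2 * pi * (exp (- (complex_of_real l * z)) - (\<Sum>n\<in>{1 - int N..int N}. K_term l z n))" for N
  have "F \<longlonglongrightarrow> 0 + 2 * pi * (exp (- (complex_of_real l * z)) - K_ker l z)"
    unfolding F_def K_ker_def using l \<beta>
    by (intro tendsto_intros vertical_line_integral_contour_kernel_tendsto_0
        infsum_symmetric_partial_sums_tendsto K_term_summable[OF l cz]) auto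
  moreover have "\<forall>\<^sub>F N in sequentially. Re z < real N"
    using filterlim_real_sequentially unfolding filterlim_at_top_dense by blast
  then have "\<forall>\<^sub>F N in sequentially. (LINT t|lborel. contour_kernel z l (Complex \<beta> t)) = F N"
    by eventually_elim (simp add: F_def line_integral_contour_kernel_shift[OF _ \<beta> cz] l less_imp_le)
  then have "F \<longlonglongrightarrow> (LINT t|lborel. contour_kernel z l (Complex \<beta> t))"
    by (rule Lim_transform_eventually[OF tendsto_const])
  ultimately show ?thesis using LIMSEQ_unique by fastforce
qed

lemma K_ker_at_pole:
  assumes cz: "cos (complex_of_real pi * z) = 0" and z: "0 < Re z"
  shows "K_ker l z = exp (- (complex_of_real l * z))"
proof -
  obtain k :: nat where k: "1 \<le> k" "z = of_nat k - 1/2"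
    using cos_pi_eq_0_right_half_plane[OF cz z] by blast
  have "K_term l z n = (if n = int k then exp (- (complex_of_real l * z)) else 0)" for n
  proof (cases "n = int k")
    case True
    have "(-1::complex) powi n * (-1) ^ k = 1" by (simp add: True power_int_of_nat flip: power_add)
    moreover have "complex_of_real (exp (- l * \<bar>real_of_int n - 1/2\<bar>)) = exp (- (complex_of_real l * z))"
      unfolding exp_of_real[symmetric] k(2) using k(1) True by (simp add: algebra_simps)
    ultimately show ?thesis
      using k True unfolding K_term_def Let_def by (simp add: sin_pi_half_integer mult.assoc)
  next
    case False
    then have "z \<noteq> of_int n - 1/2" using k by (auto simp: complex_eq_iff)
    with False show ?thesis unfolding K_term_def Let_def by (simp add: cz)
  qed
  then have "K_ker l z = (\<Sum>\<^sub>\<infinity>n\<in>{int k}. (if n = int k then exp (- (complex_of_real l * z)) else 0))"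
    unfolding K_ker_def by (intro infsum_cong_neutral) auto
  then show ?thesis by simp
qed

section \<open>Integration against \<open>\<nu>\<close>\<close>

locale finite_measure_on_pos_reals = finite_measure M for M :: "real measure" +
  assumes sets_eq: "sets M = sets (restrict_space borel {0<..})"
begin

lemma space_eq: "space M = {0<..}"
  using sets_eq_imp_space_eq[OF sets_eq] by (simp add: space_restrict_space)

lemma measurable_ident: "(\<lambda>x. x) \<in> M \<rightarrow>\<^sub>M borel"
  unfolding measurable_cong_sets[OF sets_eq refl] by (rule measurable_restrict_space1) simp

lemma integrable_exp_mult:
  assumes "0 \<le> Re z" shows "integrable M (\<lambda>l. exp (- (complex_of_real l * z)))"
proof (rule integrable_const_bound[where B = 1])
  show "AE l in M. norm (exp (- (complex_of_real l * z))) \<le> 1"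
    using assms space_eq by (intro AE_I2) (auto simp: mult_nonneg_nonneg)
  show "(\<lambda>l. exp (- (complex_of_real l * z))) \<in> borel_measurable M"
    using measurable_compose[OF measurable_ident, of "\<lambda>l. exp (- (complex_of_real l * z))"]
    by (simp add: borel_measurable_continuous_onI continuous_intros)
qed

lemma integrable_contour_kernel_product:
  assumes "0 < c" "cos (pi * c) \<noteq> 0" "c < Re z"
  shows "integrable (M \<Otimes>\<^sub>M lborel) (\<lambda>(l, t). contour_kernel z l (Complex c t))"
proof -
  interpret p: pair_sigma_finite M lborel ..
  have c: "0 < c" "cos (pi * c) \<noteq> 0" "0 < Re z" "Re z \<noteq> c" using assms by auto
  define K where "K = norm (cos (complex_of_real pi * z)) * (2 / \<bar>cos (pi * c)\<bar>) *
      (2 / \<bar>Re z - c\<bar> + 2 * norm z / (\<bar>Re z - c\<bar> * (Re z + c)))"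
  have K0: "K \<ge> 0" unfolding K_def using assms
    by (intro mult_nonneg_nonneg add_nonneg_nonneg divide_nonneg_nonneg) auto
  have bound: "norm (contour_kernel z l (Complex c t)) \<le> K * exp (- pi * \<bar>t\<bar>)" if "l \<in> space M" for l t
  proof -
    have "norm (contour_kernel z l (Complex c t)) \<le> K * exp (- l * c) * exp (- pi * \<bar>t\<bar>)"
      unfolding K_def by (rule norm_contour_kernel_vertical_le[OF c])
    also have "\<dots> \<le> K * 1 * exp (- pi * \<bar>t\<bar>)"
      using that space_eq assms K0 by (intro mult_right_mono mult_left_mono) auto
    finally show ?thesis by simp
  qed
  have "(\<lambda>p. (fst p, snd p)) \<in> (M \<Otimes>\<^sub>M lborel) \<rightarrow>\<^sub>M (borel \<Otimes>\<^sub>M borel)"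
    using measurable_ident by (intro measurable_Pair)
      (auto intro: measurable_compose[OF measurable_fst] measurable_compose[OF measurable_snd])
  then have "(\<lambda>p. p) \<in> (M \<Otimes>\<^sub>M lborel) \<rightarrow>\<^sub>M (borel :: (real \<times> real) measure)"
    by (simp add: borel_prod)
  then have meas: "(\<lambda>p. contour_kernel z (fst p) (Complex c (snd p))) \<in> borel_measurable (M \<Otimes>\<^sub>M lborel)"
    using measurable_compose borel_measurable_continuous_onI[OF continuous_on_contour_kernel_vertical[OF c]]
    by blast
  have "integrable (M \<Otimes>\<^sub>M lborel) (\<lambda>p. contour_kernel z (fst p) (Complex c (snd p)))"
  proof (rule p.Fubini_integrable[OF meas])
    have "(LINT t|lborel. norm (contour_kernel z l (Complex c t))) \<le> K * (LINT t|lborel. exp (- pi * \<bar>t\<bar>))"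
      if "l \<in> space M" for l
      using integrable_contour_kernel_vertical[OF c] integrable_exp_neg_abs[of pi] bound[OF that]
      by (subst integral_mult_right_zero[symmetric], intro integral_mono) auto
    then show "integrable M (\<lambda>l. LINT t|lborel. norm (contour_kernel z (fst (l, t)) (Complex c (snd (l, t)))))"
      using lborel.borel_measurable_lebesgue_integral[of "\<lambda>l t. norm (contour_kernel z l (Complex c t))" M] meas
      by (intro integrable_const_bound[where B = "K * (LINT t|lborel. exp (- pi * \<bar>t\<bar>))"] AE_I2) auto
    show "AE l in M. integrable lborel (\<lambda>t. contour_kernel z (fst (l, t)) (Complex c (snd (l, t))))"
      using integrable_contour_kernel_vertical[OF c] by simp
  qed
  then show ?thesis by (simp add: case_prod_beta')
qed

lemma Psi_nu_minus_K_star: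
  assumes \<beta>: "0 < \<beta>" "\<beta> < 1/2" "\<beta> < Re z" and cz: "cos (complex_of_real pi * z) \<noteq> 0"
  shows "integrable lborel (\<lambda>t. contour_integrand M z (Complex \<beta> t))"
    and "Psi_nu M z - K_star M z = 1 / (2 * pi) * (LINT t|lborel. contour_integrand M z (Complex \<beta> t))"
proof -
  interpret p: pair_sigma_finite M lborel ..
  define G where "G l t = contour_kernel z l (Complex \<beta> t)" for l t
  have "cos (pi * \<beta>) > 0" using \<beta> by (intro cos_gt_zero) (auto simp: field_simps)
  then have prod: "integrable (M \<Otimes>\<^sub>M lborel) (\<lambda>(l, t). G l t)"
    unfolding G_def using \<beta> by (intro integrable_contour_kernel_product) auto
  have integrand: "contour_integrand M z (Complex \<beta> t) = (LINT l|M. G l t)" for t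
    by (simp add: G_def contour_integrand_eq_integral_kernel)
  show "integrable lborel (\<lambda>t. contour_integrand M z (Complex \<beta> t))"
    unfolding integrand by (rule p.integrable_snd[OF prod])
  have line: "(LINT t|lborel. G l t) = 2 * pi * (exp (- (complex_of_real l * z)) - K_ker l z)"
    if "l \<in> space M" for l
    using that space_eq \<beta> cz by (simp add: G_def line_integral_contour_kernel)
  have exp_int: "integrable M (\<lambda>l. exp (- (complex_of_real l * z)))"
    using \<beta> by (intro integrable_exp_mult) auto
  have "integrable M (\<lambda>l. exp (- (complex_of_real l * z)) - 1 / (2 * pi) * (LINT t|lborel. G l t))"
    using exp_int p.integrable_fst[OF prod] by (intro Bochner_Integration.integrable_diff integrable_mult_right) simp
  then have K_int: "integrable M (\<lambda>l. K_ker l z)"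
    by (rule Bochner_Integration.integrable_cong[THEN iffD1, OF refl, rotated]) (simp add: line)
  have "Psi_nu M z - K_star M z = (LINT l|M. exp (- (complex_of_real l * z)) - K_ker l z)"
    unfolding Psi_nu_def K_star_def by (rule Bochner_Integration.integral_diff[OF exp_int K_int, symmetric])
  also have "\<dots> = (LINT l|M. 1 / (2 * pi) * (LINT t|lborel. G l t))"
    by (intro Bochner_Integration.integral_cong refl) (simp add: line)
  also have "\<dots> = 1 / (2 * pi) * (LINT t|lborel. LINT l|M. G l t)"
    using p.Fubini_integral[OF prod] by simp
  finally show "Psi_nu M z - K_star M z = 1 / (2 * pi) * (LINT t|lborel. contour_integrand M z (Complex \<beta> t))"
    by (simp add: integrand)
qed

lemma Psi_nu_eq_K_star_at_pole:
  assumes "cos (complex_of_real pi * z) = 0" "0 < Re z"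
  shows "Psi_nu M z = K_star M z"
  unfolding K_star_def Psi_nu_def using assms space_eq
  by (intro Bochner_Integration.integral_cong refl) (simp add: K_ker_at_pole)

end

theorem lemma4p4:
  fixes \<nu> :: "real measure" and \<beta> :: real and z :: complex
  assumes "finite_measure \<nu>"
    and "sets \<nu> = sets (restrict_space borel {0<..})"
    and "0 < \<beta>" and "\<beta> < 1/2"
    and "Re z > \<beta>"
  shows "integrable lborel (\<lambda>t::real. contour_integrand \<nu> z (Complex \<beta> t))
    \<and> Psi_nu \<nu> z - K_star \<nu> z =
      1 / (2 * complex_of_real pi * \<i>) *
      (\<i> * (LINT t|lborel. contour_integrand \<nu> z (Complex \<beta> t)))"
proof -
  interpret finite_measure_on_pos_reals \<nu>
    using assms(1,2) by (simp add: finite_measure_on_pos_reals_def finite_measure_on_pos_reals_axioms_def)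
  show ?thesis
  proof (cases "cos (complex_of_real pi * z) = 0")
    case True
    then have "contour_integrand \<nu> z w = 0" for w by (simp add: contour_integrand_def)
    with True show ?thesis using assms(3,5) Psi_nu_eq_K_star_at_pole by simp
  next
    case False
    with assms(3-5) show ?thesis using Psi_nu_minus_K_star by simp
  qed
qed

end
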